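(* Let $M$ be a gasket automaton over $\Sigma=\{1,\dots,N\}$ and let $0<\xi<1$. Then $(\Sigma^\infty,\rho_{M,\xi})$ is a pseudo-quasimetric space; that is, for all $\mathbf x,\mathbf y,\mathbf z\in\Sigma^\infty$: $\rho_{M,\xi}(\mathbf x,\mathbf x)=0$, $\rho_{M,\xi}(\mathbf x,\mathbf y)=\rho_{M,\xi}(\mathbf y,\mathbf x)$, and there is a constant $C\ge 1$ independent of $\mathbf x,\mathbf y,\mathbf z$ with $\rho_{M,\xi}(\mathbf x,\mathbf z)\le C(\rho_{M,\xi}(\mathbf x,\mathbf y)+\rho_{M,\xi}(\mathbf y,\mathbf z))$.
   Context: $\Sigma^\infty$ is the set of infinite words $\mathbf x=x_1x_2\cdots$ over $\Sigma$. A $\Sigma$-automaton $M$ has finite state set $Q=Q_0\cup\{Id,Exit\}$, input alphabet $\Sigma^2$, initial state $Id$, final state $Exit$, and transition function $\delta:Q\times\Sigma^2\to Q$ with $\delta(Id,(i,j))=Id$ iff $i=j$. For $(\mathbf x,\mathbf y)\in\Sigma^\infty\times\Sigma^\infty$ the itinerary is $S_0=Id$, $S_k=\delta(S_{k-1},(x_k,y_k))$, stopped when $Exit$ is reached. The surviving time $T_M(\mathbf x,\mathbf y)\in\{0,1,2,\dots\}\cup\{\infty\}$ is the largest $k$ with $S_k\neq Exit$ ($\infty$ if $Exit$ is never reached), and $\rho_{M,\xi}(\mathbf x,\mathbf y)=\xi^{T_M(\mathbf x,\mathbf y)}$ with $\xi^\infty=0$. Triangle automaton: let $\alpha,\beta,\gamma$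 be three distinct elements of $\Sigma\cup\{-1,-2,-3\}$; $M$ is a $\Sigma$-automaton with $Q=\{S_{uv}:u,v\in\{\alpha,\beta,\gamma\},u\ne v\}\cup\{Id,Exit\}$ such that (i) if $\delta(Id,(i,j))=S_{uv}$ then $\delta(Id,(j,i))=S_{vu}$; (ii) $\delta(S_{uv},(i,j))=S_{uv}$ if $(i,j)=(v,u)$ and $=Exit$ otherwise; also $\delta(Exit,\cdot)=Exit$. Let $\mathcal P_{uv}=\{(i,j)\in\Sigma^2:\delta(Id,(i,j))=S_{uv}\}$ and write $i\triangleleft_{uv}j$ iff $(i,j)\in\mathcal P_{uv}$ (so $i\triangleleft_{uv}j$ iff $j\triangleleft_{vu}i$). A symbol $j$ is $uv$-minimal if there is no $i$ with $i\triangleleft_{uv}j$, $uv$-maximal if there is no $k$ with $j\triangleleft_{uv}k$, and $uv$-isolated if both. Gasket automaton: a triangle automaton such that for all distinct $u,v\in\{\alpha,\beta,\gamma\}$: (Uniqueness) $i\triangleleft_{uv}j$ and $i\triangleleft_{uv}j'$ imply $j=j'$; (Gathering) for $a,b,c\in\Sigma$, any two of $a\triangleleft_{\alpha\gamma}c$, $a\triangleleft_{\beta\gamma}b$, $b\triangleleft_{\alpha\beta}c$ imply the third; (Boundary) if $\alpha\in\Sigma$ then $\alpha$ is $\alpha\gamma$-minimal and $\alpha\beta$-minimal; if $\beta\in\Sigma$ then $\beta$ is $\beta\gamma$-minimal and $\beta\alpha$-minimal; if $\gamma\in\Sigma$ then $\gamma$ is $\gamma\alpha$-minimal and $\gamma\beta$-minimal.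 *)

theory Defs
  imports Complex_Main
begin

text \<open>Alphabet \<Sigma> = {1..N}, symbols are integers so that the extra labels -1,-2,-3
  used for \<alpha>,\<beta>,\<gamma> are available.\<close>

definition Sig :: "nat \<Rightarrow> int set" where
  "Sig N = {1..int N}"

datatype state = Id | Exit | S int int

text \<open>Infinite words over \<Sigma>; the letter x_(k+1) of the paper is x k here.\<close>
definition is_word :: "nat \<Rightarrow> (nat \<Rightarrow> int) \<Rightarrow> bool" where
  "is_word N x \<longleftrightarrow> (\<forall>k. x k \<in> Sig N)"

fun itin :: "(state \<Rightarrow> int \<times> int \<Rightarrow> state) \<Rightarrow> (nat \<Rightarrow> int) \<Rightarrow> (nat \<Rightarrow> int) \<Rightarrow> nat \<Rightarrow> state" where
  "itin \<delta> x y 0 = Id"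
| "itin \<delta> x y (Suc k) = (if itin \<delta> x y k = Exit then Exit else \<delta> (itin \<delta> x y k) (x k, y k))"

text \<open>\<rho>_{M,\<xi>}(x,y) = \<xi>^T, T the surviving time (largest k with S_k \<noteq> Exit), \<xi>^\<infinity> = 0.\<close>
definition rho :: "(state \<Rightarrow> int \<times> int \<Rightarrow> state) \<Rightarrow> real \<Rightarrow> (nat \<Rightarrow> int) \<Rightarrow> (nat \<Rightarrow> int) \<Rightarrow> real" where
  "rho \<delta> \<xi> x y =
     (if \<forall>k. itin \<delta> x y k \<noteq> Exit then 0
      else \<xi> ^ ((LEAST k. itin \<delta> x y k = Exit) - 1))"

definition tri :: "nat \<Rightarrow> (state \<Rightarrow> int \<times> int \<Rightarrow> state) \<Rightarrow> int \<Rightarrow> int \<Rightarrow> int \<Rightarrow> int \<Rightarrow> bool" where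
  "tri N \<delta> u v i j \<longleftrightarrow> i \<in> Sig N \<and> j \<in> Sig N \<and> \<delta> Id (i, j) = S u v"

definition uv_minimal :: "nat \<Rightarrow> (state \<Rightarrow> int \<times> int \<Rightarrow> state) \<Rightarrow> int \<Rightarrow> int \<Rightarrow> int \<Rightarrow> bool" where
  "uv_minimal N \<delta> u v j \<longleftrightarrow> \<not> (\<exists>i. tri N \<delta> u v i j)"

definition uv_maximal :: "nat \<Rightarrow> (state \<Rightarrow> int \<times> int \<Rightarrow> state) \<Rightarrow> int \<Rightarrow> int \<Rightarrow> int \<Rightarrow> bool" where
  "uv_maximal N \<delta> u v j \<longleftrightarrow> \<not> (\<exists>k. tri N \<delta> u v j k)"

definition triangle_automaton ::
  "nat \<Rightarrow> int \<Rightarrow> int \<Rightarrow> int \<Rightarrow> (state \<Rightarrow> int \<times> int \<Rightarrow> state) \<Rightarrow> bool" where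
  "triangle_automaton N \<alpha> \<beta> \<gamma> \<delta> \<longleftrightarrow>
     (let L = {\<alpha>, \<beta>, \<gamma>}; Q = {S u v | u v. u \<in> L \<and> v \<in> L \<and> u \<noteq> v} \<union> {Id, Exit} in
     \<alpha> \<in> Sig N \<union> {-1, -2, -3} \<and> \<beta> \<in> Sig N \<union> {-1, -2, -3} \<and> \<gamma> \<in> Sig N \<union> {-1, -2, -3} \<and>
     \<alpha> \<noteq> \<beta> \<and> \<alpha> \<noteq> \<gamma> \<and> \<beta> \<noteq> \<gamma> \<and>
     \<comment> \<open>\<delta> : Q \<times> \<Sigma>^2 \<rightarrow> Q\<close>
     (\<forall>q\<in>Q. \<forall>i\<in>Sig N. \<forall>j\<in>Sig N. \<delta> q (i, j) \<in> Q) \<and>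
     \<comment> \<open>\<delta>(Id,(i,j)) = Id iff i = j\<close>
     (\<forall>i\<in>Sig N. \<forall>j\<in>Sig N. \<delta> Id (i, j) = Id \<longleftrightarrow> i = j) \<and>
     \<comment> \<open>(i)\<close>
     (\<forall>i\<in>Sig N. \<forall>j\<in>Sig N. \<forall>u v. \<delta> Id (i, j) = S u v \<longrightarrow> \<delta> Id (j, i) = S v u) \<and>
     \<comment> \<open>(ii)\<close>
     (\<forall>u\<in>L. \<forall>v\<in>L. u \<noteq> v \<longrightarrow> (\<forall>i\<in>Sig N. \<forall>j\<in>Sig N.
         \<delta> (S u v) (i, j) = (if (i, j) = (v, u) then S u v else Exit))) \<and>
     (\<forall>i\<in>Sig N. \<forall>j\<in>Sig N. \<delta> Exit (i, j) = Exit))"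

definition gasket_automaton ::
  "nat \<Rightarrow> int \<Rightarrow> int \<Rightarrow> int \<Rightarrow> (state \<Rightarrow> int \<times> int \<Rightarrow> state) \<Rightarrow> bool" where
  "gasket_automaton N \<alpha> \<beta> \<gamma> \<delta> \<longleftrightarrow>
     triangle_automaton N \<alpha> \<beta> \<gamma> \<delta> \<and>
     \<comment> \<open>Uniqueness\<close>
     (\<forall>u\<in>{\<alpha>, \<beta>, \<gamma>}. \<forall>v\<in>{\<alpha>, \<beta>, \<gamma>}. u \<noteq> v \<longrightarrow>
        (\<forall>i j j'. tri N \<delta> u v i j \<and> tri N \<delta> u v i j' \<longrightarrow> j = j')) \<and>
     \<comment> \<open>Gathering\<close>
     (\<forall>a\<in>Sig N. \<forall>b\<in>Sig N. \<forall>c\<in>Sig N.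
        (tri N \<delta> \<alpha> \<gamma> a c \<and> tri N \<delta> \<beta> \<gamma> a b \<longrightarrow> tri N \<delta> \<alpha> \<beta> b c) \<and>
        (tri N \<delta> \<alpha> \<gamma> a c \<and> tri N \<delta> \<alpha> \<beta> b c \<longrightarrow> tri N \<delta> \<beta> \<gamma> a b) \<and>
        (tri N \<delta> \<beta> \<gamma> a b \<and> tri N \<delta> \<alpha> \<beta> b c \<longrightarrow> tri N \<delta> \<alpha> \<gamma> a c)) \<and>
     \<comment> \<open>Boundary\<close>
     (\<alpha> \<in> Sig N \<longrightarrow> uv_minimal N \<delta> \<alpha> \<gamma> \<alpha> \<and> uv_minimal N \<delta> \<alpha> \<beta> \<alpha>) \<and>
     (\<beta> \<in> Sig N \<longrightarrow> uv_minimal N \<delta> \<beta> \<gamma> \<beta> \<and> uv_minimal N \<delta> \<beta> \<alpha> \<beta>) \<and>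
     (\<gamma> \<in> Sig N \<longrightarrow> uv_minimal N \<delta> \<gamma> \<alpha> \<gamma> \<and> uv_minimal N \<delta> \<gamma> \<beta> \<gamma>)"

end

theory Submission
  imports Defs
begin

text \<open>
  Read the state \<open>S u v\<close> of a pair of words \<open>(x, y)\<close> as the promise that from now on \<open>x\<close>
  reads \<open>v\<close> and \<open>y\<close> reads \<open>u\<close>, while \<open>Id\<close> means that the words have agreed so far. As long
  as \<open>(x, y)\<close> and \<open>(y, z)\<close> both survive one step longer, the state of \<open>(x, z)\<close> is determined
  by theirs: \<open>Id\<close> is neutral, and \<open>S u v\<close> followed by \<open>S s u\<close> gives \<open>Id\<close> if \<open>s = v\<close>
  (Uniqueness) and \<open>S s v\<close> otherwise (Gathering); Boundary excludes leaving \<open>Id\<close> towards the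
  corner that the middle word is reading. Hence \<open>T(x,z) \<ge> min (T(x,y)) (T(y,z)) - 1\<close>, that is
  \<open>\<xi> \<rho>(x,z) \<le> max (\<rho>(x,y)) (\<rho>(y,z))\<close>. Symmetry holds because exchanging the two words
  swaps the two labels of every state.
\<close>

fun swap_state :: "state \<Rightarrow> state" where
  "swap_state Id = Id"
| "swap_state Exit = Exit"
| "swap_state (S u v) = S v u"

text \<open>
  If \<open>(x, y)\<close> is in state \<open>S u v\<close> and \<open>(y, z)\<close> in state \<open>S s u\<close>, then \<open>x\<close> reads \<open>v\<close> and \<open>z\<close>
  reads \<open>s\<close> from now on; the second index of the right state is ignored because it must equal \<open>u\<close>.
\<close>

fun compose_state :: "state \<Rightarrow> state \<Rightarrow> state" where
  "compose_state Id q = q"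
| "compose_state q Id = q"
| "compose_state (S u v) (S s t) = (if s = v then Id else S s v)"
| "compose_state _ _ = Exit"

lemma swap_state_eq_Exit_iff [simp]: "swap_state q = Exit \<longleftrightarrow> q = Exit"
  by (cases q) auto

lemma compose_state_neq_Exit:
  "p \<noteq> Exit \<Longrightarrow> q \<noteq> Exit \<Longrightarrow> compose_state p q \<noteq> Exit"
  by (cases p; cases q) auto

lemma tri_SigD: "tri N \<delta> u v i j \<Longrightarrow> i \<in> Sig N" "tri N \<delta> u v i j \<Longrightarrow> j \<in> Sig N"
  by (simp_all add: tri_def)

lemma rho_cong:
  assumes "\<And>k. itin \<delta> x y k = Exit \<longleftrightarrow> itin \<delta> x' y' k = Exit"
  shows "rho \<delta> \<xi> x y = rho \<delta> \<xi> x' y'"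
  unfolding rho_def assms ..

lemma rho_nonneg: "0 \<le> \<xi> \<Longrightarrow> 0 \<le> rho \<delta> \<xi> x y"
  unfolding rho_def by auto

lemma rho_ge_power:
  assumes "0 \<le> \<xi>" "\<xi> \<le> 1" "itin \<delta> x y n = Exit"
  shows "\<xi> ^ (n - 1) \<le> rho \<delta> \<xi> x y"
proof -
  have "(LEAST k. itin \<delta> x y k = Exit) \<le> n"
    using assms(3) by (rule Least_le)
  then have "\<xi> ^ (n - 1) \<le> \<xi> ^ ((LEAST k. itin \<delta> x y k = Exit) - 1)"
    using assms(1,2) by (intro power_decreasing) auto
  then show ?thesis
    using assms(3) unfolding rho_def by auto
qed

lemma rho_le_max_if_survival:
  assumes "0 < \<xi>" "\<xi> \<le> 1"
    and survival: "\<And>k. itin \<delta> x y (Suc k) \<noteq> Exit \<Longrightarrow> itin \<delta> y z (Suc k) \<noteq> Exit \<Longrightarrow>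
      itin \<delta> x z k \<noteq> Exit"
  shows "\<xi> * rho \<delta> \<xi> x z \<le> max (rho \<delta> \<xi> x y) (rho \<delta> \<xi> y z)"
proof (cases "\<forall>k. itin \<delta> x z k \<noteq> Exit")
  case True
  then have "rho \<delta> \<xi> x z = 0" by (simp add: rho_def)
  then show ?thesis using rho_nonneg[of \<xi> \<delta> x y] assms(1) by simp
next
  case False
  define D where "D = (LEAST k. itin \<delta> x z k = Exit)"
  have exit: "itin \<delta> x z D = Exit"
    using False unfolding D_def by (fastforce intro: LeastI)
  then obtain d where D: "D = Suc d"
    by (cases D) auto
  have "\<xi> * rho \<delta> \<xi> x z = \<xi> ^ D"
  proof -
    have "rho \<delta> \<xi> x z = \<xi> ^ d"
      unfolding rho_def if_not_P[OF False] D_def[symmetric] D by simp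
    then show ?thesis by (simp add: D)
  qed
  also have "\<dots> \<le> max (rho \<delta> \<xi> x y) (rho \<delta> \<xi> y z)"
  proof -
    have "itin \<delta> x y (Suc D) = Exit \<or> itin \<delta> y z (Suc D) = Exit"
      using survival[of D] exit by blast
    then show ?thesis
      using rho_ge_power[of \<xi> \<delta> x y "Suc D"] rho_ge_power[of \<xi> \<delta> y z "Suc D"] assms(1,2)
      by (auto simp: le_max_iff_disj)
  qed
  finally show ?thesis .
qed

locale triangle =
  fixes N :: nat and \<alpha> \<beta> \<gamma> :: int and \<delta> :: "state \<Rightarrow> int \<times> int \<Rightarrow> state"
  assumes triangle: "triangle_automaton N \<alpha> \<beta> \<gamma> \<delta>"
begin

definition states :: "state set" where
  "states = {S u v | u v. u \<in> {\<alpha>, \<beta>, \<gamma>} \<and> v \<in> {\<alpha>, \<beta>, \<gamma>} \<and> u \<noteq> v} \<union> {Id, Exit}"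

lemma Id_in_states [simp]: "Id \<in> states"
  and Exit_in_states [simp]: "Exit \<in> states"
  by (simp_all add: states_def)

lemma S_in_states_iff [simp]:
  "S u v \<in> states \<longleftrightarrow> u \<in> {\<alpha>, \<beta>, \<gamma>} \<and> v \<in> {\<alpha>, \<beta>, \<gamma>} \<and> u \<noteq> v"
  by (auto simp: states_def)

lemma delta_in_states: "q \<in> states \<Longrightarrow> i \<in> Sig N \<Longrightarrow> j \<in> Sig N \<Longrightarrow> \<delta> q (i, j) \<in> states"
  using triangle unfolding triangle_automaton_def Let_def states_def by blast

lemma delta_Id_eq_Id_iff: "i \<in> Sig N \<Longrightarrow> j \<in> Sig N \<Longrightarrow> \<delta> Id (i, j) = Id \<longleftrightarrow> i = j"
  using triangle unfolding triangle_automaton_def Let_def by blast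

lemma delta_Id_S_swap:
  "i \<in> Sig N \<Longrightarrow> j \<in> Sig N \<Longrightarrow> \<delta> Id (i, j) = S u v \<Longrightarrow> \<delta> Id (j, i) = S v u"
  using triangle unfolding triangle_automaton_def Let_def by blast

lemma delta_S:
  assumes "S u v \<in> states" "i \<in> Sig N" "j \<in> Sig N"
  shows "\<delta> (S u v) (i, j) = (if (i, j) = (v, u) then S u v else Exit)"
proof -
  have "u \<in> {\<alpha>, \<beta>, \<gamma>}" "v \<in> {\<alpha>, \<beta>, \<gamma>}" "u \<noteq> v"
    using assms(1) by simp_all
  then show ?thesis
    using triangle assms(2,3) unfolding triangle_automaton_def Let_def by blast
qed

lemma delta_Exit: "i \<in> Sig N \<Longrightarrow> j \<in> Sig N \<Longrightarrow> \<delta> Exit (i, j) = Exit"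
  using triangle unfolding triangle_automaton_def Let_def by blast

lemma delta_S_neq_ExitD:
  assumes "S u v \<in> states" "i \<in> Sig N" "j \<in> Sig N" "\<delta> (S u v) (i, j) \<noteq> Exit"
  shows "i = v" "j = u" "\<delta> (S u v) (i, j) = S u v"
  using assms delta_S[OF assms(1-3)] by (simp_all split: if_splits)

lemma tri_swap: "tri N \<delta> u v i j \<longleftrightarrow> tri N \<delta> v u j i"
  unfolding tri_def using delta_Id_S_swap by blast

lemma delta_Id_swap:
  assumes "i \<in> Sig N" "j \<in> Sig N"
  shows "\<delta> Id (j, i) = swap_state (\<delta> Id (i, j))"
proof (cases "\<delta> Id (i, j)")
  case Id
  then have "i = j" using delta_Id_eq_Id_iff[OF assms] by simp
  then show ?thesis using Id by simp
next
  case (S u v)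
  then show ?thesis using delta_Id_S_swap[OF assms S] by simp
next
  case Exit
  have "\<delta> Id (j, i) \<noteq> Id"
    using Exit delta_Id_eq_Id_iff[OF assms] delta_Id_eq_Id_iff[OF assms(2,1)] by auto
  moreover have "\<delta> Id (j, i) \<noteq> S u v" for u v
    using Exit delta_Id_S_swap[OF assms(2,1), of u v] by auto
  ultimately show ?thesis
    using Exit by (cases "\<delta> Id (j, i)") auto
qed

lemma delta_swap:
  assumes "q \<in> states" "i \<in> Sig N" "j \<in> Sig N"
  shows "\<delta> (swap_state q) (j, i) = swap_state (\<delta> q (i, j))"
proof (cases q)
  case Id
  then show ?thesis using delta_Id_swap[OF assms(2,3)] by simp
next
  case Exit
  then show ?thesis using delta_Exit[OF assms(2,3)] delta_Exit[OF assms(3,2)] by simp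
next
  case (S u v)
  moreover have "S v u \<in> states" using assms(1) S by auto
  ultimately show ?thesis using assms by (simp add: delta_S)
qed

lemma itin_in_states:
  assumes "is_word N x" "is_word N y"
  shows "itin \<delta> x y k \<in> states"
proof (induction k)
  case (Suc k)
  then show ?case using assms delta_in_states by (simp add: is_word_def)
qed simp

lemma itin_diag: "is_word N x \<Longrightarrow> itin \<delta> x x k = Id"
  by (induction k) (simp_all add: is_word_def delta_Id_eq_Id_iff)

lemma itin_swap:
  assumes "is_word N x" "is_word N y"
  shows "itin \<delta> y x k = swap_state (itin \<delta> x y k)"
proof (induction k)
  case (Suc k)
  have "x k \<in> Sig N" "y k \<in> Sig N" using assms by (simp_all add: is_word_def)
  from delta_swap[OF itin_in_states[OF assms] this, of k]
  show ?case by (simp add: Suc)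
qed simp

lemma itin_S_Suc_neq_ExitD:
  assumes "is_word N x" "is_word N y" "itin \<delta> x y k = S u v" "itin \<delta> x y (Suc k) \<noteq> Exit"
  shows "x k = v" "y k = u"
proof -
  have "S u v \<in> states" "x k \<in> Sig N" "y k \<in> Sig N"
    using assms itin_in_states[OF assms(1,2), of k] by (simp_all add: is_word_def)
  moreover have "\<delta> (S u v) (x k, y k) \<noteq> Exit"
    using assms(3,4) by simp
  ultimately show "x k = v" "y k = u"
    by (rule delta_S_neq_ExitD)+
qed

lemma rho_diag: "is_word N x \<Longrightarrow> rho \<delta> \<xi> x x = 0"
  by (simp add: rho_def itin_diag)

lemma rho_swap:
  assumes "is_word N x" "is_word N y"
  shows "rho \<delta> \<xi> y x = rho \<delta> \<xi> x y"
  using itin_swap[OF assms] by (intro rho_cong) simp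

end

locale gasket =
  fixes N :: nat and \<alpha> \<beta> \<gamma> :: int and \<delta> :: "state \<Rightarrow> int \<times> int \<Rightarrow> state"
  assumes gasket: "gasket_automaton N \<alpha> \<beta> \<gamma> \<delta>"

sublocale gasket \<subseteq> triangle
proof (rule triangle.intro)
  show "triangle_automaton N \<alpha> \<beta> \<gamma> \<delta>"
    using gasket unfolding gasket_automaton_def by (rule conjunct1)
qed

context gasket
begin

lemma uniqueness:
  "\<forall>u\<in>{\<alpha>, \<beta>, \<gamma>}. \<forall>v\<in>{\<alpha>, \<beta>, \<gamma>}. u \<noteq> v \<longrightarrow>
     (\<forall>i j j'. tri N \<delta> u v i j \<and> tri N \<delta> u v i j' \<longrightarrow> j = j')"
  using gasket unfolding gasket_automaton_def by (elim conjE)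

lemma gathering:
  "\<forall>a\<in>Sig N. \<forall>b\<in>Sig N. \<forall>c\<in>Sig N.
     (tri N \<delta> \<alpha> \<gamma> a c \<and> tri N \<delta> \<beta> \<gamma> a b \<longrightarrow> tri N \<delta> \<alpha> \<beta> b c) \<and>
     (tri N \<delta> \<alpha> \<gamma> a c \<and> tri N \<delta> \<alpha> \<beta> b c \<longrightarrow> tri N \<delta> \<beta> \<gamma> a b) \<and>
     (tri N \<delta> \<beta> \<gamma> a b \<and> tri N \<delta> \<alpha> \<beta> b c \<longrightarrow> tri N \<delta> \<alpha> \<gamma> a c)"
  using gasket unfolding gasket_automaton_def by (elim conjE)

lemma boundary:
  "(\<alpha> \<in> Sig N \<longrightarrow> uv_minimal N \<delta> \<alpha> \<gamma> \<alpha> \<and> uv_minimal N \<delta> \<alpha> \<beta> \<alpha>) \<and>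
   (\<beta> \<in> Sig N \<longrightarrow> uv_minimal N \<delta> \<beta> \<gamma> \<beta> \<and> uv_minimal N \<delta> \<beta> \<alpha> \<beta>) \<and>
   (\<gamma> \<in> Sig N \<longrightarrow> uv_minimal N \<delta> \<gamma> \<alpha> \<gamma> \<and> uv_minimal N \<delta> \<gamma> \<beta> \<gamma>)"
  using gasket unfolding gasket_automaton_def by (elim conjE) (intro conjI)

lemma delta_Id_unique:
  assumes "S u v \<in> states" "i \<in> Sig N" "j \<in> Sig N" "j' \<in> Sig N"
    and "\<delta> Id (i, j) = S u v" "\<delta> Id (i, j') = S u v"
  shows "j = j'"
proof -
  have "tri N \<delta> u v i j" "tri N \<delta> u v i j'"
    using assms by (simp_all add: tri_def)
  moreover have "u \<in> {\<alpha>, \<beta>, \<gamma>}" "v \<in> {\<alpha>, \<beta>, \<gamma>}" "u \<noteq> v"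
    using assms(1) by simp_all
  ultimately show ?thesis
    using uniqueness by blast
qed

lemma vertex_pair_cases:
  assumes "S u v \<in> states"
  obtains "u = \<alpha>" "v = \<beta>" | "u = \<alpha>" "v = \<gamma>" | "u = \<beta>" "v = \<alpha>"
    | "u = \<beta>" "v = \<gamma>" | "u = \<gamma>" "v = \<alpha>" | "u = \<gamma>" "v = \<beta>"
  using assms by auto

lemma delta_Id_boundary:
  assumes "S u v \<in> states" "u \<in> Sig N" "i \<in> Sig N"
  shows "\<delta> Id (i, u) \<noteq> S u v"
proof -
  have "uv_minimal N \<delta> u v u"
    using assms(1) by (cases rule: vertex_pair_cases) (use boundary assms(2) in simp_all)
  then show ?thesis
    using assms(2,3) by (simp add: uv_minimal_def tri_def)
qed

lemma tri_gathering:
  assumes "S u v \<in> states" "S s u \<in> states" "s \<noteq> v"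
    and "tri N \<delta> u v i j" "tri N \<delta> s u j l"
  shows "tri N \<delta> s v i l"
proof -
  have rules:
    "tri N \<delta> \<alpha> \<gamma> a c \<Longrightarrow> tri N \<delta> \<beta> \<gamma> a b \<Longrightarrow> tri N \<delta> \<alpha> \<beta> b c"
    "tri N \<delta> \<alpha> \<gamma> a c \<Longrightarrow> tri N \<delta> \<alpha> \<beta> b c \<Longrightarrow> tri N \<delta> \<beta> \<gamma> a b"
    "tri N \<delta> \<beta> \<gamma> a b \<Longrightarrow> tri N \<delta> \<alpha> \<beta> b c \<Longrightarrow> tri N \<delta> \<alpha> \<gamma> a c" for a b c
    using gathering by (blast dest: tri_SigD)+
  \<comment> \<open>each orientation of the triangle is one of the three clauses, up to \<open>tri_swap\<close>\<close>
  show ?thesis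
    using assms(1)
  proof (cases rule: vertex_pair_cases)
    case 1
    with assms(2,3) have "s = \<gamma>" by auto
    with 1 assms(4,5) show ?thesis by (metis rules(2)[of l j i] tri_swap)
  next
    case 2
    with assms(2,3) have "s = \<beta>" by auto
    with 2 assms(4,5) show ?thesis by (metis rules(2)[of i j l] tri_swap)
  next
    case 3
    with assms(2,3) have "s = \<gamma>" by auto
    with 3 assms(4,5) show ?thesis by (metis rules(3)[of l j i] tri_swap)
  next
    case 4
    with assms(2,3) have "s = \<alpha>" by auto
    with 4 assms(4,5) show ?thesis by (metis rules(3)[of i j l] tri_swap)
  next
    case 5
    with assms(2,3) have "s = \<beta>" by auto
    with 5 assms(4,5) show ?thesis by (metis rules(1)[of j i l] tri_swap)
  next
    case 6
    with assms(2,3) have "s = \<alpha>" by auto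
    with 6 assms(4,5) show ?thesis by (metis rules(1)[of j l i] tri_swap)
  qed
qed

lemma delta_Id_compose:
  assumes "i \<in> Sig N" "j \<in> Sig N" "l \<in> Sig N"
    and alive: "\<delta> Id (i, j) \<noteq> Exit" "\<delta> Id (j, l) \<noteq> Exit"
    and compatible: "\<And>u v s t. \<delta> Id (i, j) = S u v \<Longrightarrow> \<delta> Id (j, l) = S s t \<Longrightarrow> t = u"
  shows "\<delta> Id (i, l) = compose_state (\<delta> Id (i, j)) (\<delta> Id (j, l))"
proof (cases "\<delta> Id (i, j)")
  case Id
  then have "i = j" using delta_Id_eq_Id_iff assms(1,2) by blast
  then show ?thesis using Id by simp
next
  case Exit
  then show ?thesis using alive by simp
next
  case ij: (S u v)
  have uv: "S u v \<in> states"
    using delta_in_states[OF Id_in_states assms(1,2)] ij by simp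
  show ?thesis
  proof (cases "\<delta> Id (j, l)")
    case Id
    then have "j = l" using delta_Id_eq_Id_iff assms(2,3) by blast
    then show ?thesis using ij Id by simp
  next
    case Exit
    then show ?thesis using alive by simp
  next
    case jl: (S s t)
    have "t = u" using compatible ij jl .
    have su: "S s u \<in> states"
      using delta_in_states[OF Id_in_states assms(2,3)] jl \<open>t = u\<close> by simp
    have ji: "\<delta> Id (j, i) = S v u"
      using assms(1,2) ij by (rule delta_Id_S_swap)
    show ?thesis
    proof (cases "s = v")
      case True
      have "S v u \<in> states" using uv by auto
      moreover have "\<delta> Id (j, l) = S v u" using jl True \<open>t = u\<close> by simp
      ultimately have "i = l"
        using delta_Id_unique ji assms by blast
      then have "\<delta> Id (i, l) = Id"
        using delta_Id_eq_Id_iff assms(1) by blast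
      then show ?thesis
        using ij jl True by simp
    next
      case False
      have "tri N \<delta> u v i j" "tri N \<delta> s u j l"
        using ij jl \<open>t = u\<close> assms(1-3) by (simp_all add: tri_def)
      then have "tri N \<delta> s v i l"
        by (rule tri_gathering[OF uv su False])
      then show ?thesis
        using ij jl False by (simp add: tri_def)
    qed
  qed
qed

lemma eq_of_delta_Id_right_corner:
  assumes "i \<in> Sig N" "j \<in> Sig N" "\<delta> Id (i, j) \<noteq> Exit"
    and corner: "\<And>u v. \<delta> Id (i, j) = S u v \<Longrightarrow> j = u"
  shows "i = j"
proof (cases "\<delta> Id (i, j)")
  case (S u v)
  moreover have "S u v \<in> states"
    using delta_in_states[OF Id_in_states assms(1,2)] S by simp
  ultimately show ?thesis
    using corner[OF S] delta_Id_boundary assms(1,2) by blast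
qed (use assms delta_Id_eq_Id_iff in auto)

lemma eq_of_delta_Id_left_corner:
  assumes "i \<in> Sig N" "j \<in> Sig N" "\<delta> Id (i, j) \<noteq> Exit"
    and corner: "\<And>u v. \<delta> Id (i, j) = S u v \<Longrightarrow> i = v"
  shows "i = j"
proof -
  have swap: "\<delta> Id (j, i) = swap_state (\<delta> Id (i, j))"
    by (rule delta_Id_swap[OF assms(1,2)])
  have "j = i"
  proof (rule eq_of_delta_Id_right_corner[OF assms(2,1)])
    show "\<delta> Id (j, i) \<noteq> Exit"
      using swap assms(3) by simp
    show "i = u" if "\<delta> Id (j, i) = S u v" for u v
      using corner[of v u] that swap by (cases "\<delta> Id (i, j)") simp_all
  qed
  then show ?thesis ..
qed

lemma delta_compose_Id_state:
  assumes b: "b \<in> states" and Sig: "i \<in> Sig N" "j \<in> Sig N" "l \<in> Sig N"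
    and alive: "\<delta> Id (i, j) \<noteq> Exit" "\<delta> b (j, l) \<noteq> Exit"
    and compatible: "\<And>u v s t. \<delta> Id (i, j) = S u v \<Longrightarrow> \<delta> b (j, l) = S s t \<Longrightarrow> t = u"
  shows "\<delta> b (i, l) = compose_state (\<delta> Id (i, j)) (\<delta> b (j, l))"
proof (cases b)
  case Id
  show ?thesis
    unfolding Id by (rule delta_Id_compose[OF Sig alive[unfolded Id] compatible[unfolded Id]])
next
  case Exit
  then show ?thesis
    using alive(2) delta_Exit[OF Sig(2,3)] by simp
next
  case (S s t)
  have jl: "j = t" "\<delta> b (j, l) = b"
    using delta_S_neq_ExitD[of s t j l] b alive(2) Sig(2,3) S by simp_all
  have "i = j"
    using Sig(1,2) alive(1)
  proof (rule eq_of_delta_Id_right_corner)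
    show "j = u" if "\<delta> Id (i, j) = S u v" for u v
      using compatible[OF that] jl S by simp
  qed
  then have "\<delta> Id (i, j) = Id"
    using delta_Id_eq_Id_iff Sig(1,2) by blast
  then show ?thesis
    using jl \<open>i = j\<close> by simp
qed

lemma delta_compose_S_state:
  assumes a: "S u v \<in> states" and b: "b \<in> states" and Sig: "i \<in> Sig N" "j \<in> Sig N" "l \<in> Sig N"
    and alive: "\<delta> (S u v) (i, j) \<noteq> Exit" "\<delta> b (j, l) \<noteq> Exit"
    and compatible: "\<And>s t. \<delta> b (j, l) = S s t \<Longrightarrow> t = u"
  shows "\<delta> (compose_state (S u v) b) (i, l) = compose_state (\<delta> (S u v) (i, j)) (\<delta> b (j, l))"
proof -
  have ij: "i = v" "j = u" "\<delta> (S u v) (i, j) = S u v"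
    using delta_S_neq_ExitD[OF a Sig(1,2) alive(1)] by simp_all
  show ?thesis
  proof (cases b)
    case Id
    have "j = l"
      using Sig(2,3) alive(2)[unfolded Id]
    proof (rule eq_of_delta_Id_left_corner)
      show "j = t" if "\<delta> Id (j, l) = S s t" for s t
        using compatible[of s t] that Id ij(2) by simp
    qed
    then have "\<delta> Id (j, l) = Id"
      using delta_Id_eq_Id_iff Sig(2,3) by blast
    then show ?thesis
      using Id ij \<open>j = l\<close> by simp
  next
    case Exit
    then show ?thesis
      using alive(2) delta_Exit[OF Sig(2,3)] by simp
  next
    case (S s t)
    have jl: "j = t" "l = s" "\<delta> b (j, l) = b"
      using delta_S_neq_ExitD[of s t j l] b alive(2) Sig(2,3) S by simp_all
    show ?thesis
    proof (cases "s = v")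
      case True
      then show ?thesis
        using S ij jl delta_Id_eq_Id_iff Sig(1) by simp
    next
      case False
      then have "S s v \<in> states"
        using a b S by auto
      then show ?thesis
        using S ij jl False delta_S Sig by simp
    qed
  qed
qed

lemma delta_compose_state:
  assumes a: "a \<in> states" and b: "b \<in> states"
    and Sig: "i \<in> Sig N" "j \<in> Sig N" "l \<in> Sig N"
    and alive: "\<delta> a (i, j) \<noteq> Exit" "\<delta> b (j, l) \<noteq> Exit"
    and compatible: "\<And>u v s t. \<delta> a (i, j) = S u v \<Longrightarrow> \<delta> b (j, l) = S s t \<Longrightarrow> t = u"
  shows "\<delta> (compose_state a b) (i, l) = compose_state (\<delta> a (i, j)) (\<delta> b (j, l))"
proof (cases a)
  case Id
  show ?thesis
    unfolding Id compose_state.simps(1)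
    by (rule delta_compose_Id_state[OF b Sig alive[unfolded Id] compatible[unfolded Id]])
next
  case Exit
  then show ?thesis
    using alive(1) delta_Exit[OF Sig(1,2)] by simp
next
  case (S u v)
  have uv: "S u v \<in> states"
    using a S by simp
  have "\<delta> a (i, j) = S u v"
    using delta_S_neq_ExitD(3)[OF uv Sig(1,2)] alive(1) S by simp
  then have "t = u" if "\<delta> b (j, l) = S s t" for s t
    using compatible that by blast
  then show ?thesis
    unfolding S by (rule delta_compose_S_state[OF uv b Sig alive[unfolded S]])
qed

text \<open>
  Survival of \<open>(x, y)\<close> and \<open>(y, z)\<close> up to step \<open>k + 2\<close> fixes the letter of \<open>y\<close> at step \<open>k + 1\<close>,
  which is the compatibility needed to compose their states at step \<open>k + 1\<close>.
\<close>

lemma itin_compose: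
  assumes words: "is_word N x" "is_word N y" "is_word N z"
  shows "itin \<delta> x y (Suc k) \<noteq> Exit \<Longrightarrow> itin \<delta> y z (Suc k) \<noteq> Exit \<Longrightarrow>
    itin \<delta> x z k = compose_state (itin \<delta> x y k) (itin \<delta> y z k)"
proof (induction k)
  case (Suc k)
  let ?a = "itin \<delta> x y k" and ?b = "itin \<delta> y z k"
  have alive: "itin \<delta> x y (Suc k) \<noteq> Exit" "itin \<delta> y z (Suc k) \<noteq> Exit"
    using Suc.prems by (auto split: if_splits)
  then have a_b: "?a \<noteq> Exit" "?b \<noteq> Exit"
    by (auto split: if_splits)
  have Sig: "x k \<in> Sig N" "y k \<in> Sig N" "z k \<in> Sig N"
    using words by (simp_all add: is_word_def)
  have step: "itin \<delta> x y (Suc k) = \<delta> ?a (x k, y k)" "itin \<delta> y z (Suc k) = \<delta> ?b (y k, z k)"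
    using a_b by simp_all
  have xz: "itin \<delta> x z k = compose_state ?a ?b"
    using Suc.IH alive .
  have compatible: "t = u"
    if "\<delta> ?a (x k, y k) = S u v" "\<delta> ?b (y k, z k) = S s t" for u v s t
  proof -
    have "y (Suc k) = u"
      using itin_S_Suc_neq_ExitD(2)[OF words(1,2) _ Suc.prems(1)] that(1) step(1) by simp
    moreover have "y (Suc k) = t"
      using itin_S_Suc_neq_ExitD(1)[OF words(2,3) _ Suc.prems(2)] that(2) step(2) by simp
    ultimately show ?thesis by simp
  qed
  have "itin \<delta> x z (Suc k) = \<delta> (compose_state ?a ?b) (x k, z k)"
    using xz compose_state_neq_Exit[OF a_b] by simp
  also have "\<dots> = compose_state (\<delta> ?a (x k, y k)) (\<delta> ?b (y k, z k))"
    using itin_in_states[OF words(1,2)] itin_in_states[OF words(2,3)] Sig alive[unfolded step]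
    by (rule delta_compose_state) (rule compatible)
  also have "\<dots> = compose_state (itin \<delta> x y (Suc k)) (itin \<delta> y z (Suc k))"
    by (simp only: step)
  finally show ?case .
qed simp

lemma itin_survival:
  assumes "is_word N x" "is_word N y" "is_word N z"
    and "itin \<delta> x y (Suc k) \<noteq> Exit" "itin \<delta> y z (Suc k) \<noteq> Exit"
  shows "itin \<delta> x z k \<noteq> Exit"
proof -
  have "itin \<delta> x y k \<noteq> Exit" "itin \<delta> y z k \<noteq> Exit"
    using assms(4,5) by (auto split: if_splits)
  then show ?thesis
    using itin_compose[OF assms] compose_state_neq_Exit by simp
qed

lemma rho_quasi_ultrametric:
  assumes "0 < \<xi>" "\<xi> \<le> 1" "is_word N x" "is_word N y" "is_word N z"
  shows "\<xi> * rho \<delta> \<xi> x z \<le> max (rho \<delta> \<xi> x y) (rho \<delta> \<xi> y z)"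
  using assms(1,2) itin_survival[OF assms(3-5)] by (rule rho_le_max_if_survival)

end

theorem theorem1p1:
  fixes N :: nat and \<alpha> \<beta> \<gamma> :: int and \<delta> :: "state \<Rightarrow> int \<times> int \<Rightarrow> state" and \<xi> :: real
  assumes "gasket_automaton N \<alpha> \<beta> \<gamma> \<delta>"
    and "0 < \<xi>" and "\<xi> < 1"
  shows "(\<forall>x. is_word N x \<longrightarrow> rho \<delta> \<xi> x x = 0)
       \<and> (\<forall>x y. is_word N x \<and> is_word N y \<longrightarrow> rho \<delta> \<xi> x y = rho \<delta> \<xi> y x)
       \<and> (\<exists>C\<ge>1. \<forall>x y z. is_word N x \<and> is_word N y \<and> is_word N z \<longrightarrow>
              rho \<delta> \<xi> x z \<le> C * (rho \<delta> \<xi> x y + rho \<delta> \<xi> y z))"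
proof -
  interpret gasket N \<alpha> \<beta> \<gamma> \<delta>
    using assms(1) by (rule gasket.intro)
  have "rho \<delta> \<xi> x z \<le> 1 / \<xi> * (rho \<delta> \<xi> x y + rho \<delta> \<xi> y z)"
    if "is_word N x" "is_word N y" "is_word N z" for x y z
  proof -
    have "\<xi> * rho \<delta> \<xi> x z \<le> max (rho \<delta> \<xi> x y) (rho \<delta> \<xi> y z)"
      using assms(2,3) that by (intro rho_quasi_ultrametric) simp_all
    also have "\<dots> \<le> rho \<delta> \<xi> x y + rho \<delta> \<xi> y z"
      using rho_nonneg[of \<xi> \<delta> x y] rho_nonneg[of \<xi> \<delta> y z] assms(2) by simp
    finally have "\<xi> * rho \<delta> \<xi> x z \<le> rho \<delta> \<xi> x y + rho \<delta> \<xi> y z" .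
    then show ?thesis
      using assms(2) by (simp add: field_simps)
  qed
  moreover have "1 \<le> 1 / \<xi>"
    using assms(2,3) by simp
  ultimately show ?thesis
    using rho_diag rho_swap by blast
qed

end
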